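(* Let $f:\Sigma\to\mathbb{L}^3$ be a minface, written near a regular point $p$ in local coordinates $(u,v)$ as $f(u,v)=\frac{\varphi(u)+\psi(v)}{2}$ with $\varphi(u)=\int_{u_0}^u(-1-g_1^2,1-g_1^2,2g_1)\hat\omega_1\,du$ and $\psi(v)=\int_{v_0}^v(1+g_2^2,1-g_2^2,-2g_2)\hat\omega_2\,dv$ (plus a constant), and let $p=(u_p,v_p)$. Then: (i) $p$ is an umbilic point of $f$ if and only if both null curves $\varphi$ and $\psi$ are degenerate at $p$ (i.e. $\varphi$ at $u_p$ and $\psi$ at $v_p$); (ii) $p$ is a quasi-umbilic point of $f$ if and only if exactly one of the two null curves $\varphi$, $\psi$ is degenerate at $p$.
   Context: $\mathbb{L}^3$ is $\mathbb{R}^3$ with the Lorentzian metric $-(dx^0)^2+(dx^1)^2+(dx^2)^2$. A smooth map $f:\Sigma\to\mathbb{L}^3$ from a connected oriented 2-manifold is a minface if around each point there are local coordinates $(u,v)$ on a domain $U$, smooth functions $g_1(u)$, $g_2(v)$ and nowhere-vanishing smooth functions $\hat\omega_1(u)$, $\hat\omega_2(v)$, with $g_1g_2\neq1$ on an open dense subset of $U$, such that $f=\frac{\varphi(u)+\psi(v)}{2}+\mathrm{const}$ with $\varphi,\psi$ as in the claim; $\varphi$ and $\psi$ are null curves (regular curves with lightlike velocity). Regular points are points where $f$ is an immersion; there $f$ is a timelike immersion with zero mean curvature. A null curve $\gamma$ is degenerate at $t$ if $\gamma'(t)\times\gamma''(t)=0$ (cross product) and non-degenerate otherwise. At a regular point,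 with spacelike unit normal $\nu$, the shape operator $S$ is given by $df(S(X))=-\overline\nabla_X\nu$; the point is umbilic if the second fundamental form is a scalar multiple of the first fundamental form there, and quasi-umbilic if $S$ is not diagonalizable over $\mathbb{C}$ there. *)

theory Defs
  imports "HOL-Analysis.Analysis"
begin

text \<open>Lorentz-Minkowski space L^3: real^3 with metric -(dx0)^2+(dx1)^2+(dx2)^2.
  The coordinate x^0 is component 1, x^1 is component 2, x^2 is component 3.\<close>

definition lip :: "real^3 \<Rightarrow> real^3 \<Rightarrow> real" where
  "lip x y = - (x$1 * y$1) + x$2 * y$2 + x$3 * y$3"

text \<open>Lorentzian cross product: lip (lcross x y) z = det(x,y,z).\<close>
definition lcross :: "real^3 \<Rightarrow> real^3 \<Rightarrow> real^3" where
  "lcross x y = (let c = cross3 x y in vector [- (c$1), c$2, c$3])"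

definition smooth_on :: "real set \<Rightarrow> (real \<Rightarrow> real) \<Rightarrow> bool" where
  "smooth_on S g \<longleftrightarrow> (\<forall>n. \<forall>x\<in>S. ((deriv ^^ n) g) field_differentiable (at x))"

definition pd_u :: "(real \<times> real \<Rightarrow> real^3) \<Rightarrow> real \<times> real \<Rightarrow> real^3" where
  "pd_u f p = vector_derivative (\<lambda>u. f (u, snd p)) (at (fst p))"
definition pd_v :: "(real \<times> real \<Rightarrow> real^3) \<Rightarrow> real \<times> real \<Rightarrow> real^3" where
  "pd_v f p = vector_derivative (\<lambda>v. f (fst p, v)) (at (snd p))"
definition pd_uu :: "(real \<times> real \<Rightarrow> real^3) \<Rightarrow> real \<times> real \<Rightarrow> real^3" where
  "pd_uu f p = vector_derivative (\<lambda>u. pd_u f (u, snd p)) (at (fst p))"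
definition pd_uv :: "(real \<times> real \<Rightarrow> real^3) \<Rightarrow> real \<times> real \<Rightarrow> real^3" where
  "pd_uv f p = vector_derivative (\<lambda>v. pd_u f (fst p, v)) (at (snd p))"
definition pd_vv :: "(real \<times> real \<Rightarrow> real^3) \<Rightarrow> real \<times> real \<Rightarrow> real^3" where
  "pd_vv f p = vector_derivative (\<lambda>v. pd_v f (fst p, v)) (at (snd p))"

definition regular_point :: "(real \<times> real \<Rightarrow> real^3) \<Rightarrow> real \<times> real \<Rightarrow> bool" where
  "regular_point f p \<longleftrightarrow> f differentiable (at p) \<and> inj (frechet_derivative f (at p))"

definition unit_normal :: "(real \<times> real \<Rightarrow> real^3) \<Rightarrow> real \<times> real \<Rightarrow> real^3" where
  "unit_normal f p = (let n = lcross (pd_u f p) (pd_v f p) in (1 / sqrt (lip n n)) *\<^sub>R n)"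

definition first_ff :: "(real \<times> real \<Rightarrow> real^3) \<Rightarrow> real \<times> real \<Rightarrow> real^2^2" where
  "first_ff f p = vector [vector [lip (pd_u f p) (pd_u f p), lip (pd_u f p) (pd_v f p)],
                          vector [lip (pd_v f p) (pd_u f p), lip (pd_v f p) (pd_v f p)]]"

definition second_ff :: "(real \<times> real \<Rightarrow> real^3) \<Rightarrow> real \<times> real \<Rightarrow> real^2^2" where
  "second_ff f p = (let \<nu> = unit_normal f p in
     vector [vector [lip (pd_uu f p) \<nu>, lip (pd_uv f p) \<nu>],
             vector [lip (pd_uv f p) \<nu>, lip (pd_vv f p) \<nu>]])"

text \<open>Shape operator S (df(S X) = - nabla_X nu), whose matrix is I^{-1} II.\<close>
definition shape_operator :: "(real \<times> real \<Rightarrow> real^3) \<Rightarrow> real \<times> real \<Rightarrow> real^2^2" where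
  "shape_operator f p = matrix_inv (first_ff f p) ** second_ff f p"

definition diagonalizable_over_C :: "real^2^2 \<Rightarrow> bool" where
  "diagonalizable_over_C A \<longleftrightarrow>
     (\<exists>P :: complex^2^2. invertible P \<and>
        (\<forall>i j. i \<noteq> j \<longrightarrow> (matrix_inv P ** map_matrix complex_of_real A ** P) $ i $ j = 0))"

definition umbilic_at :: "(real \<times> real \<Rightarrow> real^3) \<Rightarrow> real \<times> real \<Rightarrow> bool" where
  "umbilic_at f p \<longleftrightarrow> regular_point f p \<and> (\<exists>k::real. second_ff f p = k *\<^sub>R first_ff f p)"

definition quasi_umbilic_at :: "(real \<times> real \<Rightarrow> real^3) \<Rightarrow> real \<times> real \<Rightarrow> bool" where
  "quasi_umbilic_at f p \<longleftrightarrow> regular_point f p \<and> \<not> diagonalizable_over_C (shape_operator f p)"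

definition degenerate_at :: "(real \<Rightarrow> real^3) \<Rightarrow> real \<Rightarrow> bool" where
  "degenerate_at \<gamma> t \<longleftrightarrow>
     cross3 (vector_derivative \<gamma> (at t))
            (vector_derivative (\<lambda>s. vector_derivative \<gamma> (at s)) (at t)) = 0"

end

theory Submission
  imports Defs
begin

(* In the coordinates (u, v) both coordinate curves are null, so the first fundamental form is
   antidiagonal, I = [[0, F], [F, 0]], and since f_uv = 0 the second one is diagonal, II = diag(L, N).
   Thus II is a multiple of I iff L = N = 0, while the shape operator I^-1 II = [[0, N/F], [L/F, 0]]
   has eigenvalues +-sqrt(L N)/F and fails to be diagonalizable over C exactly when it is a nonzero
   nilpotent, i.e. when exactly one of L, N vanishes.  For the Weierstrass data, L and N are nonzero
   multiples of g1'(u_p) and g2'(v_p), and phi' x phi'' = w1^2 g1' (phi_dir x phi_dir') with the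
   last cross product never zero, so phi is degenerate at u_p iff g1'(u_p) = 0 (likewise for psi).  The nondegeneracy
   g1 g2 <> 1 at p needed along the way follows from regularity: for g1 g2 = 1 the velocities of
   phi and psi are parallel. *)

section \<open>Real and complex 2x2 matrices\<close>

lemma invertible_matrix_inv_mult:
  fixes A :: "'a::semiring_1^'n^'n"
  assumes "invertible A"
  shows "A ** matrix_inv A = mat 1" "matrix_inv A ** A = mat 1"
  using someI_ex[OF assms[unfolded invertible_def]] unfolding matrix_inv_def by auto

lemma matrix_inv_unique:
  fixes A B :: "'a::semiring_1^'n^'n"
  assumes "A ** B = mat 1" "B ** A = mat 1"
  shows "matrix_inv A = B"
proof -
  have "invertible A" using assms invertible_def by blast
  have "matrix_inv A = matrix_inv A ** (A ** B)" using assms by (simp add: matrix_mul_rid)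
  also have "\<dots> = (matrix_inv A ** A) ** B" by (simp add: matrix_mul_assoc)
  also have "\<dots> = B" using invertible_matrix_inv_mult[OF \<open>invertible A\<close>] by (simp add: matrix_mul_lid)
  finally show ?thesis .
qed

lemma matrix_eq_iff_2:
  "(A::'a^2^2) = B \<longleftrightarrow> A$1$1 = B$1$1 \<and> A$1$2 = B$1$2 \<and> A$2$1 = B$2$1 \<and> A$2$2 = B$2$2"
  by (auto simp: vec_eq_iff forall_2)

lemma matrix_matrix_mult_component_2:
  "((A::'a::semiring_1^2^2) ** B) $ i $ j = A$i$1 * B$1$j + A$i$2 * B$2$j"
  by (simp add: matrix_matrix_mult_def sum_2)

lemma matrix_inv_antidiag_2:
  fixes F :: real
  assumes "F \<noteq> 0"
  shows "matrix_inv (vector [vector [0, F], vector [F, 0]] :: real^2^2)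
       = vector [vector [0, 1/F], vector [1/F, 0]]"
  by (rule matrix_inv_unique)
     (simp_all add: matrix_eq_iff_2 matrix_matrix_mult_component_2 mat_def assms)

lemma nilpotent_not_similar_to_diagonal:
  fixes S :: "complex^2^2"
    and P :: "complex^2^2"
  assumes "S ** S = 0" "S \<noteq> 0" "invertible P"
  shows "\<not> (\<forall>i j. i \<noteq> j \<longrightarrow> (matrix_inv P ** S ** P) $ i $ j = 0)"
proof
  assume diagonal: "\<forall>i j. i \<noteq> j \<longrightarrow> (matrix_inv P ** S ** P) $ i $ j = 0"
  define D where "D = matrix_inv P ** S ** P"
  have off: "D$1$2 = 0" "D$2$1 = 0" using diagonal unfolding D_def by auto
  have "D ** D = matrix_inv P ** S ** (P ** matrix_inv P) ** S ** P"
    by (simp add: D_def matrix_mul_assoc)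
  also have "\<dots> = matrix_inv P ** (S ** S) ** P"
    using invertible_matrix_inv_mult[OF \<open>invertible P\<close>] by (simp add: matrix_mul_rid matrix_mul_assoc)
  also have "\<dots> = 0"
    using assms(1) by (simp add: matrix_eq_iff_2 matrix_matrix_mult_component_2)
  finally have "(D ** D)$1$1 = 0" "(D ** D)$2$2 = 0" by simp_all
  then have "D = 0" using off by (auto simp: matrix_eq_iff_2 matrix_matrix_mult_component_2)
  have "S = (P ** matrix_inv P) ** S ** (P ** matrix_inv P)"
    using invertible_matrix_inv_mult[OF \<open>invertible P\<close>] by (simp add: matrix_mul_lid matrix_mul_rid)
  also have "\<dots> = P ** D ** matrix_inv P" by (simp add: D_def matrix_mul_assoc)
  finally show False
    using \<open>D = 0\<close> \<open>S \<noteq> 0\<close> by (simp add: matrix_eq_iff_2 matrix_matrix_mult_component_2)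
qed

lemma diagonalizable_over_C_antidiag_2:
  "diagonalizable_over_C (vector [vector [0, c], vector [d, 0]]) \<longleftrightarrow> (c = 0 \<longleftrightarrow> d = 0)"
proof -
  define a where "a = complex_of_real c"
  define b where "b = complex_of_real d"
  define M where "M = map_matrix complex_of_real (vector [vector [0, c], vector [d, 0]] :: real^2^2)"
  have M: "M = vector [vector [0, a], vector [b, 0]]"
    by (simp add: M_def a_def b_def matrix_eq_iff_2)
  have diag_iff: "diagonalizable_over_C (vector [vector [0, c], vector [d, 0]]) \<longleftrightarrow>
      (\<exists>P::complex^2^2. invertible P \<and> (\<forall>i j. i \<noteq> j \<longrightarrow> (matrix_inv P ** M ** P) $ i $ j = 0))"
    by (simp add: diagonalizable_over_C_def M_def)
  have "c = 0 \<longleftrightarrow> a = 0" "d = 0 \<longleftrightarrow> b = 0" by (simp_all add: a_def b_def)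
  moreover consider "a = 0" "b = 0" | "a \<noteq> 0" "b \<noteq> 0" | "(a = 0) \<noteq> (b = 0)" by blast
  then have "(\<exists>P::complex^2^2. invertible P \<and> (\<forall>i j. i \<noteq> j \<longrightarrow> (matrix_inv P ** M ** P) $ i $ j = 0))
      \<longleftrightarrow> (a = 0 \<longleftrightarrow> b = 0)"
  proof cases
    case 1
    have "invertible (mat 1 :: complex^2^2)"
      unfolding invertible_def by (auto simp: matrix_mul_lid)
    moreover have "M = 0"
      using 1 by (simp add: M matrix_eq_iff_2)
    then have "\<forall>i j. i \<noteq> j \<longrightarrow> (matrix_inv (mat 1) ** M ** mat 1) $ i $ j = 0"
      by (simp add: matrix_matrix_mult_component_2)
    ultimately show ?thesis using 1 by blast
  next
    case 2
    \<comment> \<open>eigenvalues \<open>\<plusminus>l\<close> with \<open>l\<^sup>2 = a b \<noteq> 0\<close>, eigenvectors \<open>(a, \<plusminus>l)\<close>\<close>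
    define l where "l = csqrt (a * b)"
    have l2: "l * l = a * b" unfolding l_def by (metis power2_csqrt power2_eq_square)
    have "l \<noteq> 0" using 2 l2 by auto
    define P :: "complex^2^2" where "P = vector [vector [a, a], vector [l, -l]]"
    define D :: "complex^2^2" where "D = vector [vector [l, 0], vector [0, -l]]"
    have "invertible P" unfolding invertible_det_nz det_2 P_def using 2 \<open>l \<noteq> 0\<close> by simp
    have "M ** P = P ** D" unfolding P_def D_def
      by (simp add: matrix_eq_iff_2 matrix_matrix_mult_component_2 M l2 algebra_simps)
    then have "matrix_inv P ** M ** P = D"
      using invertible_matrix_inv_mult[OF \<open>invertible P\<close>] by (metis matrix_mul_assoc matrix_mul_lid)
    then have "\<forall>i j. i \<noteq> j \<longrightarrow> (matrix_inv P ** M ** P) $ i $ j = 0"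
      by (auto simp: D_def forall_2)
    then show ?thesis using 2 \<open>invertible P\<close> by blast
  next
    case 3
    have "M ** M = 0" "M \<noteq> 0" using 3 by (auto simp: M matrix_eq_iff_2 matrix_matrix_mult_component_2)
    then show ?thesis using 3 nilpotent_not_similar_to_diagonal[of M] by auto
  qed
  ultimately show ?thesis using diag_iff by simp
qed


section \<open>Umbilics in null coordinates\<close>

lemma umbilicity_in_null_coordinates:
  assumes "regular_point f p" "F \<noteq> 0"
    and "first_ff f p = vector [vector [0, F], vector [F, 0]]"
    and "second_ff f p = vector [vector [L, 0], vector [0, N]]"
  shows "(umbilic_at f p \<longleftrightarrow> L = 0 \<and> N = 0)
       \<and> (quasi_umbilic_at f p \<longleftrightarrow> (L = 0) \<noteq> (N = 0))"
proof -
  have "shape_operator f p = vector [vector [0, N/F], vector [L/F, 0]]"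
    unfolding shape_operator_def assms(3,4) matrix_inv_antidiag_2[OF \<open>F \<noteq> 0\<close>]
    by (simp add: matrix_eq_iff_2 matrix_matrix_mult_component_2)
  then have "quasi_umbilic_at f p \<longleftrightarrow> (L = 0) \<noteq> (N = 0)"
    using assms(1,2) by (auto simp: quasi_umbilic_at_def diagonalizable_over_C_antidiag_2)
  moreover have "umbilic_at f p \<longleftrightarrow> L = 0 \<and> N = 0"
    using assms by (auto simp: umbilic_at_def matrix_eq_iff_2 intro: exI[of _ 0])
  ultimately show ?thesis by blast
qed

lemma lip_commute: "lip x y = lip y x"
  by (simp add: lip_def algebra_simps)

lemma lip_zero_left: "lip 0 y = 0"
  by (simp add: lip_def)

lemma lip_add_left: "lip (x + y) z = lip x z + lip y z"
  by (simp add: lip_def algebra_simps)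

lemma lip_scaleR_left: "lip (c *\<^sub>R x) y = c * lip x y"
  by (simp add: lip_def algebra_simps)

lemma lip_scaleR_right: "lip x (c *\<^sub>R y) = c * lip x y"
  by (simp add: lip_def algebra_simps)

lemma lcross_scaleR_left: "lcross (c *\<^sub>R x) y = c *\<^sub>R lcross x y"
  by (simp add: lcross_def cross_mult_left Let_def vec_eq_iff forall_3)

lemma lcross_scaleR_right: "lcross x (c *\<^sub>R y) = c *\<^sub>R lcross x y"
  by (simp add: lcross_def cross_mult_right Let_def vec_eq_iff forall_3)

lemma lip_lcross_self: "lip x (lcross x y) = 0" "lip y (lcross x y) = 0"
  by (simp_all add: lip_def lcross_def cross3_def Let_def algebra_simps)

section \<open>Weierstrass data of null curves\<close>

lemma has_vector_derivative_vector_3: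
  assumes "(x has_real_derivative x') (at t)" "(y has_real_derivative y') (at t)"
    "(z has_real_derivative z') (at t)"
  shows "((\<lambda>s. vector [x s, y s, z s] :: real^3) has_vector_derivative vector [x', y', z']) (at t)"
proof -
  have decomp: "\<And>a b c. vector [a, b, c] =
      a *\<^sub>R (vector [1, 0, 0] :: real^3) + b *\<^sub>R vector [0, 1, 0] + c *\<^sub>R vector [0, 0, 1]"
    by (simp add: vec_eq_iff forall_3)
  have "((\<lambda>s. x s *\<^sub>R (vector [1, 0, 0] :: real^3) + y s *\<^sub>R vector [0, 1, 0] + z s *\<^sub>R vector [0, 0, 1])
      has_vector_derivative x' *\<^sub>R vector [1, 0, 0] + y' *\<^sub>R vector [0, 1, 0] + z' *\<^sub>R vector [0, 0, 1]) (at t)"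
    by (rule derivative_eq_intros assms | simp)+
  moreover have "(\<lambda>s. vector [x s, y s, z s]) = (\<lambda>s. x s *\<^sub>R (vector [1, 0, 0] :: real^3)
      + y s *\<^sub>R vector [0, 1, 0] + z s *\<^sub>R vector [0, 0, 1])"
    by (rule ext, rule decomp)
  ultimately show ?thesis
    by (simp only: decomp[of x' y' z'])
qed

text \<open>\<open>phi_dir g\<close> and \<open>psi_dir h\<close> are the null directions of \<open>\<phi>'\<close> and \<open>\<psi>'\<close> in the
  Weierstrass representation; the primed versions are their derivatives in \<open>g\<close> and \<open>h\<close>.\<close>

definition phi_dir :: "real \<Rightarrow> real^3" where
  "phi_dir g = vector [-1 - g^2, 1 - g^2, 2 * g]"

definition phi_dir' :: "real \<Rightarrow> real^3" where
  "phi_dir' g = vector [-2 * g, -2 * g, 2]"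

definition psi_dir :: "real \<Rightarrow> real^3" where
  "psi_dir h = vector [1 + h^2, 1 - h^2, -2 * h]"

definition psi_dir' :: "real \<Rightarrow> real^3" where
  "psi_dir' h = vector [2 * h, -2 * h, -2]"

lemma has_vector_derivative_phi_dir: "(phi_dir has_vector_derivative phi_dir' g) (at g)"
  unfolding phi_dir_def phi_dir'_def
  by (rule has_vector_derivative_vector_3) (auto intro!: derivative_eq_intros)

lemma has_vector_derivative_psi_dir: "(psi_dir has_vector_derivative psi_dir' h) (at h)"
  unfolding psi_dir_def psi_dir'_def
  by (rule has_vector_derivative_vector_3) (auto intro!: derivative_eq_intros)

lemma lip_phi_dir_self: "lip (phi_dir g) (phi_dir g) = 0"
  by (simp add: lip_def phi_dir_def) algebra

lemma lip_psi_dir_self: "lip (psi_dir h) (psi_dir h) = 0"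
  by (simp add: lip_def psi_dir_def) algebra

lemma lip_phi_dir_psi_dir: "lip (phi_dir g) (psi_dir h) = 2 * (1 - g * h)^2"
  by (simp add: lip_def phi_dir_def psi_dir_def) algebra

lemma lip_lcross_phi_dir_psi_dir:
  "lip (lcross (phi_dir g) (psi_dir h)) (lcross (phi_dir g) (psi_dir h)) = 4 * (1 - g * h)^4"
  by (simp add: lip_def lcross_def cross3_def Let_def phi_dir_def psi_dir_def) algebra

lemma lip_phi_dir'_lcross: "lip (phi_dir' g) (lcross (phi_dir g) (psi_dir h)) = - 4 * (1 - g * h)^2"
  by (simp add: lip_def lcross_def cross3_def Let_def phi_dir_def phi_dir'_def psi_dir_def) algebra

lemma lip_psi_dir'_lcross: "lip (psi_dir' h) (lcross (phi_dir g) (psi_dir h)) = 4 * (1 - g * h)^2"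
  by (simp add: lip_def lcross_def cross3_def Let_def phi_dir_def psi_dir'_def psi_dir_def) algebra

lemma cross3_phi_dir_phi_dir': "cross3 (phi_dir g) (phi_dir' g) \<noteq> 0"
proof
  assume "cross3 (phi_dir g) (phi_dir' g) = 0"
  then have "cross3 (phi_dir g) (phi_dir' g) $ 1 = 0" by simp
  moreover have "cross3 (phi_dir g) (phi_dir' g) $ 1 = 2 * (1 + g^2)"
    by (simp add: cross3_def phi_dir_def phi_dir'_def) algebra
  ultimately show False
    using add_pos_nonneg[OF zero_less_one zero_le_power2, of g] by simp
qed

lemma cross3_psi_dir_psi_dir': "cross3 (psi_dir h) (psi_dir' h) \<noteq> 0"
proof
  assume "cross3 (psi_dir h) (psi_dir' h) = 0"
  then have "cross3 (psi_dir h) (psi_dir' h) $ 1 = 0" by simp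
  moreover have "cross3 (psi_dir h) (psi_dir' h) $ 1 = - 2 * (1 + h^2)"
    by (simp add: cross3_def psi_dir_def psi_dir'_def) algebra
  ultimately show False
    using add_pos_nonneg[OF zero_less_one zero_le_power2, of h] by simp
qed

lemma phi_dir_eq_psi_dir: "g * h = 1 \<Longrightarrow> phi_dir g = - (g^2) *\<^sub>R psi_dir h"
  by (simp add: phi_dir_def psi_dir_def vec_eq_iff forall_3) algebra

lemma smooth_on_has_real_derivative:
  "smooth_on S k \<Longrightarrow> x \<in> S \<Longrightarrow> (k has_real_derivative deriv k x) (at x)"
  unfolding smooth_on_def by (metis DERIV_deriv_iff_field_differentiable funpow_0)

lemma weierstrass_curve_derivatives:
  fixes \<gamma> V :: "real \<Rightarrow> real^3"
  assumes "open I" "x \<in> I" "smooth_on I g" "smooth_on I w"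
    and \<gamma>: "\<forall>u\<in>I. (\<gamma> has_vector_derivative w u *\<^sub>R V (g u)) (at u)"
    and V: "\<And>t. (V has_vector_derivative V' t) (at t)"
  shows "vector_derivative \<gamma> (at x) = w x *\<^sub>R V (g x)"
    and "((\<lambda>s. vector_derivative \<gamma> (at s)) has_vector_derivative
           deriv w x *\<^sub>R V (g x) + (w x * deriv g x) *\<^sub>R V' (g x)) (at x)"
proof -
  show "vector_derivative \<gamma> (at x) = w x *\<^sub>R V (g x)"
    using \<gamma> \<open>x \<in> I\<close> vector_derivative_at by blast
  have "((V \<circ> g) has_vector_derivative deriv g x *\<^sub>R V' (g x)) (at x)"
    by (rule vector_diff_chain_at[OF smooth_on_has_real_derivative[OF assms(3,2),
          unfolded has_real_derivative_iff_has_vector_derivative] V])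
  from has_vector_derivative_scaleR[OF smooth_on_has_real_derivative[OF assms(4,2)] this]
  have "((\<lambda>s. w s *\<^sub>R V (g s)) has_vector_derivative
      deriv w x *\<^sub>R V (g x) + (w x * deriv g x) *\<^sub>R V' (g x)) (at x)"
    by (simp add: o_def add.commute)
  then show "((\<lambda>s. vector_derivative \<gamma> (at s)) has_vector_derivative
      deriv w x *\<^sub>R V (g x) + (w x * deriv g x) *\<^sub>R V' (g x)) (at x)"
    by (rule has_vector_derivative_transform_within_open[OF _ assms(1,2)])
       (metis \<gamma> vector_derivative_at)
qed

lemma degenerate_at_weierstrass_curve:
  fixes \<gamma> V :: "real \<Rightarrow> real^3"
  assumes "open I" "x \<in> I" "smooth_on I g" "smooth_on I w" "w x \<noteq> 0"
    and \<gamma>: "\<forall>u\<in>I. (\<gamma> has_vector_derivative w u *\<^sub>R V (g u)) (at u)"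
    and V: "\<And>t. (V has_vector_derivative V' t) (at t)"
    and "cross3 (V (g x)) (V' (g x)) \<noteq> 0"
  shows "degenerate_at \<gamma> x \<longleftrightarrow> deriv g x = 0"
proof -
  note derivs = weierstrass_curve_derivatives[OF assms(1-4) \<gamma> V]
  have "cross3 (vector_derivative \<gamma> (at x)) (vector_derivative (\<lambda>s. vector_derivative \<gamma> (at s)) (at x))
      = (w x * w x * deriv g x) *\<^sub>R cross3 (V (g x)) (V' (g x))"
    unfolding derivs(1) vector_derivative_at[OF derivs(2)]
    by (simp add: cross_add_right cross_mult_left cross_mult_right)
  then show ?thesis
    using assms(5,8) by (simp add: degenerate_at_def)
qed

section \<open>Translation surfaces\<close>

abbreviation translation_surface :: "(real \<Rightarrow> real^3) \<Rightarrow> (real \<Rightarrow> real^3) \<Rightarrow> real \<times> real \<Rightarrow> real^3"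
  where "translation_surface \<phi> \<psi> \<equiv> \<lambda>(u, v). (1/2) *\<^sub>R (\<phi> u + \<psi> v)"

lemma pd_u_translation_surface:
  "(\<phi> has_vector_derivative X) (at u) \<Longrightarrow> pd_u (translation_surface \<phi> \<psi>) (u, v) = (1/2) *\<^sub>R X"
  unfolding pd_u_def
  by (auto intro!: vector_derivative_at derivative_eq_intros)

lemma pd_v_translation_surface:
  "(\<psi> has_vector_derivative Y) (at v) \<Longrightarrow> pd_v (translation_surface \<phi> \<psi>) (u, v) = (1/2) *\<^sub>R Y"
  unfolding pd_v_def
  by (auto intro!: vector_derivative_at derivative_eq_intros)

lemma pd_uv_translation_surface:
  assumes "(\<phi> has_vector_derivative X) (at u)"
  shows "pd_uv (translation_surface \<phi> \<psi>) (u, v) = 0"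
proof -
  have "(\<lambda>v. pd_u (translation_surface \<phi> \<psi>) (u, v)) = (\<lambda>v. (1/2) *\<^sub>R X)"
    using pd_u_translation_surface[OF assms] by auto
  then show ?thesis by (simp add: pd_uv_def vector_derivative_const_at)
qed

lemma pd_uu_translation_surface:
  assumes "open I" "u \<in> I" "\<forall>s\<in>I. \<phi> differentiable (at s)"
    and "((\<lambda>s. vector_derivative \<phi> (at s)) has_vector_derivative X') (at u)"
  shows "pd_uu (translation_surface \<phi> \<psi>) (u, v) = (1/2) *\<^sub>R X'"
proof -
  have "((\<lambda>s. pd_u (translation_surface \<phi> \<psi>) (s, v)) has_vector_derivative (1/2) *\<^sub>R X') (at u)"
    by (rule has_vector_derivative_transform_within_open[OF bounded_linear.has_vector_derivative[OF bounded_linear_scaleR_right assms(4)] assms(1,2)])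
       (use assms(3) pd_u_translation_surface vector_derivative_works in metis)
  then show ?thesis by (simp add: pd_uu_def vector_derivative_at)
qed

lemma pd_vv_translation_surface:
  assumes "open J" "v \<in> J" "\<forall>t\<in>J. \<psi> differentiable (at t)"
    and "((\<lambda>t. vector_derivative \<psi> (at t)) has_vector_derivative Y') (at v)"
  shows "pd_vv (translation_surface \<phi> \<psi>) (u, v) = (1/2) *\<^sub>R Y'"
proof -
  have "((\<lambda>t. pd_v (translation_surface \<phi> \<psi>) (u, t)) has_vector_derivative (1/2) *\<^sub>R Y') (at v)"
    by (rule has_vector_derivative_transform_within_open[OF bounded_linear.has_vector_derivative[OF bounded_linear_scaleR_right assms(4)] assms(1,2)])
       (use assms(3) pd_v_translation_surface vector_derivative_works in metis)
  then show ?thesis by (simp add: pd_vv_def vector_derivative_at)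
qed

lemma translation_surface_has_derivative:
  assumes "(\<phi> has_vector_derivative X) (at u)" "(\<psi> has_vector_derivative Y) (at v)"
  shows "(translation_surface \<phi> \<psi> has_derivative (\<lambda>(s, t). (1/2) *\<^sub>R (s *\<^sub>R X + t *\<^sub>R Y))) (at (u, v))"
proof -
  have "(\<phi> has_derivative (\<lambda>s. s *\<^sub>R X)) (at (fst (u, v)))"
    using assms(1) by (simp add: has_vector_derivative_def)
  from has_derivative_compose[OF has_derivative_fst[OF has_derivative_ident] this]
  have "((\<lambda>q. \<phi> (fst q)) has_derivative (\<lambda>q. fst q *\<^sub>R X)) (at (u, v))" .
  moreover have "(\<psi> has_derivative (\<lambda>t. t *\<^sub>R Y)) (at (snd (u, v)))"
    using assms(2) by (simp add: has_vector_derivative_def)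
  from has_derivative_compose[OF has_derivative_snd[OF has_derivative_ident] this]
  have "((\<lambda>q. \<psi> (snd q)) has_derivative (\<lambda>q. snd q *\<^sub>R Y)) (at (u, v))" .
  ultimately show ?thesis
    using has_derivative_scaleR_right[OF has_derivative_add, of _ _ _ _ _ "1/2"]
    by (simp add: case_prod_unfold)
qed

lemma regular_point_translation_surface_independent:
  assumes "regular_point (translation_surface \<phi> \<psi>) (u, v)"
    and "(\<phi> has_vector_derivative X) (at u)" "(\<psi> has_vector_derivative Y) (at v)"
    and "s *\<^sub>R X + t *\<^sub>R Y = 0"
  shows "s = 0 \<and> t = 0"
proof -
  have "inj (\<lambda>(s, t). (1/2) *\<^sub>R (s *\<^sub>R X + t *\<^sub>R Y))"
    using assms(1) frechet_derivative_at[OF translation_surface_has_derivative[OF assms(2,3)]]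
    by (simp add: regular_point_def)
  from injD[OF this, of "(s, t)" "(0, 0)"] show ?thesis
    using assms(4) by simp
qed

lemma umbilicity_of_weierstrass_surface:
  assumes "regular_point f p" "a \<noteq> 0" "b \<noteq> 0" "g * h \<noteq> 1"
    and fu: "pd_u f p = (a/2) *\<^sub>R phi_dir g" and fv: "pd_v f p = (b/2) *\<^sub>R psi_dir h"
    and fuu: "pd_uu f p = (1/2) *\<^sub>R (a' *\<^sub>R phi_dir g + (a * g') *\<^sub>R phi_dir' g)"
    and fvv: "pd_vv f p = (1/2) *\<^sub>R (b' *\<^sub>R psi_dir h + (b * h') *\<^sub>R psi_dir' h)"
    and fuv: "pd_uv f p = 0"
  shows "(umbilic_at f p \<longleftrightarrow> g' = 0 \<and> h' = 0)
       \<and> (quasi_umbilic_at f p \<longleftrightarrow> (g' = 0) \<noteq> (h' = 0))"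
proof -
  define n where "n = lcross (phi_dir g) (psi_dir h)"
  define c where "c = a * b / 4"
  define s where "s = c / sqrt (c^2 * lip n n)"
  have "lip n n = 4 * (1 - g * h)^4"
    unfolding n_def by (rule lip_lcross_phi_dir_psi_dir)
  then have "s \<noteq> 0" using assms(2-4) by (simp add: s_def c_def)
  have "lcross (pd_u f p) (pd_v f p) = c *\<^sub>R n"
    unfolding fu fv lcross_scaleR_left lcross_scaleR_right by (simp add: c_def n_def)
  moreover have "lip (c *\<^sub>R n) (c *\<^sub>R n) = c^2 * lip n n"
    by (simp add: lip_scaleR_left lip_scaleR_right power2_eq_square)
  ultimately have \<nu>: "unit_normal f p = s *\<^sub>R n"
    by (simp add: unit_normal_def Let_def s_def)
  define F where "F = a * b * (1 - g * h)^2 / 2"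
  define L where "L = - 2 * s * a * (1 - g * h)^2 * g'"
  define N where "N = 2 * s * b * (1 - g * h)^2 * h'"
  have "F \<noteq> 0" and L0: "L = 0 \<longleftrightarrow> g' = 0" and N0: "N = 0 \<longleftrightarrow> h' = 0"
    using assms(2-4) \<open>s \<noteq> 0\<close> by (simp_all add: F_def L_def N_def)
  have I: "first_ff f p = vector [vector [0, F], vector [F, 0]]"
    unfolding first_ff_def fu fv F_def
    by (simp add: lip_scaleR_left lip_scaleR_right lip_phi_dir_self lip_psi_dir_self
        lip_phi_dir_psi_dir lip_commute[of "psi_dir h"] matrix_eq_iff_2)
  have II: "second_ff f p = vector [vector [L, 0], vector [0, N]]"
    unfolding second_ff_def \<nu> fuu fvv fuv L_def N_def
    by (simp add: n_def lip_zero_left lip_add_left lip_scaleR_left lip_scaleR_right lip_lcross_self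
        lip_phi_dir'_lcross lip_psi_dir'_lcross matrix_eq_iff_2)
  show ?thesis
    using umbilicity_in_null_coordinates[OF assms(1) \<open>F \<noteq> 0\<close> I II] unfolding L0 N0 .
qed

theorem proposition3p1:
  fixes g1 g2 w1 w2 :: "real \<Rightarrow> real"
    and \<phi> \<psi> :: "real \<Rightarrow> real^3"
    and I J :: "real set" and up vp :: real
  assumes "open I" "is_interval I" "open J" "is_interval J"
    and "up \<in> I" "vp \<in> J"
    and "smooth_on I g1" "smooth_on I w1" "smooth_on J g2" "smooth_on J w2"
    and "\<forall>u\<in>I. w1 u \<noteq> 0" "\<forall>v\<in>J. w2 v \<noteq> 0"
    and "\<exists>W. open W \<and> W \<subseteq> I \<times> J \<and> I \<times> J \<subseteq> closure W \<and>
              (\<forall>(u,v)\<in>W. g1 u * g2 v \<noteq> 1)"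
    and "\<forall>u\<in>I. (\<phi> has_vector_derivative
              (w1 u *\<^sub>R (vector [-1 - (g1 u)^2, 1 - (g1 u)^2, 2 * g1 u] :: real^3))) (at u)"
    and "\<forall>v\<in>J. (\<psi> has_vector_derivative
              (w2 v *\<^sub>R (vector [1 + (g2 v)^2, 1 - (g2 v)^2, -2 * g2 v] :: real^3))) (at v)"
    and "regular_point (\<lambda>(u,v). (1/2) *\<^sub>R (\<phi> u + \<psi> v)) (up, vp)"
  shows "(umbilic_at (\<lambda>(u,v). (1/2) *\<^sub>R (\<phi> u + \<psi> v)) (up, vp) \<longleftrightarrow>
            degenerate_at \<phi> up \<and> degenerate_at \<psi> vp)
       \<and> (quasi_umbilic_at (\<lambda>(u,v). (1/2) *\<^sub>R (\<phi> u + \<psi> v)) (up, vp) \<longleftrightarrow>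
            (degenerate_at \<phi> up \<noteq> degenerate_at \<psi> vp))"
proof -
  note \<phi> = assms(14)[folded phi_dir_def] and \<psi> = assms(15)[folded psi_dir_def]
  note \<phi>' = weierstrass_curve_derivatives[OF assms(1,5,7,8) \<phi> has_vector_derivative_phi_dir]
  note \<psi>' = weierstrass_curve_derivatives[OF assms(3,6,9,10) \<psi> has_vector_derivative_psi_dir]
  have \<phi>_diff: "\<forall>u\<in>I. \<phi> differentiable (at u)" and \<psi>_diff: "\<forall>v\<in>J. \<psi> differentiable (at v)"
    using \<phi> \<psi> differentiableI_vector by blast+
  have \<phi>_up: "(\<phi> has_vector_derivative w1 up *\<^sub>R phi_dir (g1 up)) (at up)"
    and \<psi>_vp: "(\<psi> has_vector_derivative w2 vp *\<^sub>R psi_dir (g2 vp)) (at vp)"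
    using \<phi> \<psi> assms(5,6) by blast+
  have "g1 up * g2 vp \<noteq> 1"
  proof
    assume "g1 up * g2 vp = 1"
    then have "w2 vp *\<^sub>R (w1 up *\<^sub>R phi_dir (g1 up)) + (w1 up * (g1 up)^2) *\<^sub>R (w2 vp *\<^sub>R psi_dir (g2 vp)) = 0"
      by (simp add: phi_dir_eq_psi_dir)
    from regular_point_translation_surface_independent[OF assms(16) \<phi>_up \<psi>_vp this]
    show False using assms(6,12) by simp
  qed
  moreover have "pd_u (translation_surface \<phi> \<psi>) (up, vp) = (w1 up / 2) *\<^sub>R phi_dir (g1 up)"
    using pd_u_translation_surface[OF \<phi>_up] by simp
  moreover have "pd_v (translation_surface \<phi> \<psi>) (up, vp) = (w2 vp / 2) *\<^sub>R psi_dir (g2 vp)"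
    using pd_v_translation_surface[OF \<psi>_vp] by simp
  ultimately have "(umbilic_at (translation_surface \<phi> \<psi>) (up, vp) \<longleftrightarrow> deriv g1 up = 0 \<and> deriv g2 vp = 0)
      \<and> (quasi_umbilic_at (translation_surface \<phi> \<psi>) (up, vp) \<longleftrightarrow> (deriv g1 up = 0) \<noteq> (deriv g2 vp = 0))"
    using umbilicity_of_weierstrass_surface[OF assms(16)]
      pd_uu_translation_surface[OF assms(1,5) \<phi>_diff \<phi>'(2)]
      pd_vv_translation_surface[OF assms(3,6) \<psi>_diff \<psi>'(2)]
      pd_uv_translation_surface[OF \<phi>_up] assms(5,6,11,12) by blast
  moreover have "degenerate_at \<phi> up \<longleftrightarrow> deriv g1 up = 0"
    using assms(5,11) by (intro degenerate_at_weierstrass_curve[OF assms(1,5,7,8) _ \<phi>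
        has_vector_derivative_phi_dir cross3_phi_dir_phi_dir']) blast
  moreover have "degenerate_at \<psi> vp \<longleftrightarrow> deriv g2 vp = 0"
    using assms(6,12) by (intro degenerate_at_weierstrass_curve[OF assms(3,6,9,10) _ \<psi>
        has_vector_derivative_psi_dir cross3_psi_dir_psi_dir']) blast
  ultimately show ?thesis by simp
qed

end
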